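(* Let $(X,d)$ be a compact metric space and $f\colon X\to X$ an equicontinuous homeomorphism. The following are equivalent: (1) $f$ has the limit shadowing property; (2) $f$ has the shadowing property; (3) $\dim X=0$, equivalently $X$ is totally disconnected.
   Context: $f$ is equicontinuous if for every $\epsilon>0$ there is $\delta>0$ such that $d(x,y)\le\delta$ implies $\sup_{n\ge0}d(f^n(x),f^n(y))\le\epsilon$. Shadowing property: for every $\epsilon>0$ there is $\delta>0$ such that every sequence $(x_i)_{i\ge0}$ with $d(f(x_i),x_{i+1})\le\delta$ for all $i$ admits $x\in X$ with $d(x_i,f^i(x))\le\epsilon$ for all $i$. Limit shadowing property: every sequence $(x_i)_{i\ge0}$ with $\lim_i d(f(x_i),x_{i+1})=0$ admits $y\in X$ with $\lim_i d(x_i,f^i(y))=0$. *)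

theory Defs
  imports "HOL-Analysis.Analysis"
begin

text \<open>All notions are relative to the compact subset X of a metric space,
  with the restricted metric.\<close>

definition equicontinuous_on :: "'a::metric_space set \<Rightarrow> ('a \<Rightarrow> 'a) \<Rightarrow> bool" where
  "equicontinuous_on X f \<longleftrightarrow>
     (\<forall>e>0. \<exists>\<delta>>0. \<forall>x\<in>X. \<forall>y\<in>X. dist x y \<le> \<delta> \<longrightarrow>
        (\<forall>n. dist ((f ^^ n) x) ((f ^^ n) y) \<le> e))"

definition shadowing_on :: "'a::metric_space set \<Rightarrow> ('a \<Rightarrow> 'a) \<Rightarrow> bool" where
  "shadowing_on X f \<longleftrightarrow>
     (\<forall>e>0. \<exists>\<delta>>0. \<forall>xs::nat \<Rightarrow> 'a.
        (\<forall>i. xs i \<in> X) \<and> (\<forall>i. dist (f (xs i)) (xs (Suc i)) \<le> \<delta>) \<longrightarrow>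
        (\<exists>x\<in>X. \<forall>i. dist (xs i) ((f ^^ i) x) \<le> e))"

definition limit_shadowing_on :: "'a::metric_space set \<Rightarrow> ('a \<Rightarrow> 'a) \<Rightarrow> bool" where
  "limit_shadowing_on X f \<longleftrightarrow>
     (\<forall>xs::nat \<Rightarrow> 'a.
        (\<forall>i. xs i \<in> X) \<and> (\<lambda>i. dist (f (xs i)) (xs (Suc i))) \<longlonglongrightarrow> 0 \<longrightarrow>
        (\<exists>y\<in>X. (\<lambda>i. dist (xs i) ((f ^^ i) y)) \<longlonglongrightarrow> 0))"

definition totally_disconnected :: "'a::topological_space set \<Rightarrow> bool" where
  "totally_disconnected X \<longleftrightarrow> (\<forall>S. S \<subseteq> X \<and> connected S \<longrightarrow> (\<exists>a. S \<subseteq> {a}))"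

end

theory Submission
  imports Defs
begin

text \<open>
  An equicontinuous homeomorphism of a compact space is recurrent in a strong sense: any two
  points return simultaneously close to themselves at arbitrarily late times, so orbits that
  eventually stay within r of each other start within r of each other. If X contains a connected
  set with two points x and y, fine chains in it from x to y (for limit shadowing: fine chains
  oscillating between x and y forever) give pseudo-orbits whose shadowing orbit eventually stays
  close both to the orbit of x and to the orbit of y; hence x = y.

  Conversely, in a compact zero-dimensional X fine chains are trapped in small clopen sets.
  By equicontinuity the relation "the orbits of a and b stay e-chained" follows from closeness,
  is f-invariant, and by recurrence also f^-1-invariant; a pseudo-orbit with small errors
  stays in one such relation class with a true orbit. For limit shadowing, the tracing point is
  a limit of points whose orbits pass exactly through the pseudo-orbit at later and later times.
  Finally, a compact metric space is zero-dimensional exactly when it is totally disconnected.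
\<close>

section \<open>Chains\<close>

definition chained :: "'a::metric_space set \<Rightarrow> real \<Rightarrow> 'a \<Rightarrow> 'a \<Rightarrow> bool" where
  "chained S e = (\<lambda>x y. x \<in> S \<and> y \<in> S \<and> dist x y < e)\<^sup>*\<^sup>*"

lemma chained_step: "x \<in> S \<Longrightarrow> y \<in> S \<Longrightarrow> dist x y < e \<Longrightarrow> chained S e x y"
  unfolding chained_def by (rule r_into_rtranclp) simp

lemma chained_refl [simp]: "chained S e x x"
  unfolding chained_def by simp

lemma chained_trans: "chained S e x y \<Longrightarrow> chained S e y z \<Longrightarrow> chained S e x z"
  unfolding chained_def by (rule rtranclp_trans)

lemma chained_sym:
  assumes "chained S e x y"
  shows "chained S e y x"
proof -
  have "symp (\<lambda>x y. x \<in> S \<and> y \<in> S \<and> dist x y < e)"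
    by (rule sympI) (simp add: dist_commute)
  from symp_rtranclp[OF this] show ?thesis
    using assms unfolding chained_def by (rule sympD)
qed

lemma chained_mono:
  assumes "chained S e x y" "e \<le> e'"
  shows "chained S e' x y"
  using assms(1) unfolding chained_def
proof (induction rule: rtranclp_induct)
  case (step y z)
  then show ?case
    using assms(2) by (simp add: rtranclp.rtrancl_into_rtrancl)
qed simp

lemma chainedE:
  assumes "chained S e x y"
  obtains c K where "c 0 = x" "c K = y"
    "\<And>i. i < K \<Longrightarrow> c i \<in> S \<and> c (Suc i) \<in> S \<and> dist (c i) (c (Suc i)) < e"
  using assms unfolding chained_def rtranclp_power relpowp_fun_conv by blast

lemma connected_imp_chained:
  assumes "connected S" "x \<in> S" "y \<in> S" "e > 0"
  shows "chained S e x y"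
proof (rule connected_equivalence_relation[OF assms(1-3)])
  fix a assume "a \<in> S"
  have "openin (top_of_set S) (S \<inter> ball a e)"
    by (simp add: openin_open_Int)
  moreover have "chained S e a b" if "b \<in> S \<inter> ball a e" for b
    using that \<open>a \<in> S\<close> by (intro chained_step) auto
  ultimately show "\<exists>T. openin (top_of_set S) T \<and> a \<in> T \<and> (\<forall>b\<in>T. chained S e a b)"
    using \<open>a \<in> S\<close> \<open>e > 0\<close> by (metis IntI centre_in_ball)
qed (erule chained_sym, erule (1) chained_trans)

lemma chained_stays_in:
  assumes "chained S e x y" "x \<in> U" "\<And>a b. a \<in> U \<Longrightarrow> b \<in> S \<Longrightarrow> dist a b < e \<Longrightarrow> b \<in> U"
  shows "y \<in> U"
  using assms(1,2) unfolding chained_def by (induction rule: rtranclp_induct) (use assms(3) in blast)+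

lemma clopen_in_compact_uniformly_isolated:
  fixes X :: "'a::metric_space set"
  assumes "compact X" "openin (top_of_set X) U" "closedin (top_of_set X) U"
  obtains e where "e > 0" "\<And>a b. a \<in> U \<Longrightarrow> b \<in> X \<Longrightarrow> dist a b < e \<Longrightarrow> b \<in> U"
proof -
  obtain T where T: "open T" "U = X \<inter> T"
    using assms(2) by (auto simp: openin_open)
  obtain T' where T': "open T'" "X - U = X \<inter> T'"
    using assms(3) by (auto simp: closedin_def openin_open)
  have "X \<subseteq> \<Union>{T, T'}"
    using T T' by blast
  then obtain e where "e > 0" and e: "\<And>x. x \<in> X \<Longrightarrow> \<exists>G\<in>{T, T'}. ball x e \<subseteq> G"
    using Heine_Borel_lemma[OF assms(1), of "{T, T'}"] T T' by blast
  show thesis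
  proof (rule that[OF \<open>e > 0\<close>])
    fix a b assume "a \<in> U" "b \<in> X" "dist a b < e"
    moreover have "a \<in> X" "a \<notin> T'"
      using \<open>a \<in> U\<close> T T' by auto
    then have "ball a e \<subseteq> T"
      using e[of a] \<open>e > 0\<close> by (metis centre_in_ball insert_iff singletonD subsetD)
    ultimately show "b \<in> U"
      using T by auto
  qed
qed

lemma chained_stays_in_clopen:
  fixes X :: "'a::metric_space set"
  assumes "compact X" "openin (top_of_set X) U" "closedin (top_of_set X) U"
  obtains e where "e > 0" "\<And>a b. a \<in> U \<Longrightarrow> chained X e a b \<Longrightarrow> b \<in> U"
proof -
  obtain e where "e > 0" and e: "\<And>a b. a \<in> U \<Longrightarrow> b \<in> X \<Longrightarrow> dist a b < e \<Longrightarrow> b \<in> U"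
    using clopen_in_compact_uniformly_isolated[OF assms] by blast
  show thesis
    using that[OF \<open>e > 0\<close>] chained_stays_in[where U = U] e by blast
qed

section \<open>Zero-dimensional compact metric spaces\<close>

lemma dim_le_0_iff_clopen_neighbourhoods:
  "X dim_le 0 \<longleftrightarrow> (\<forall>W x. openin X W \<and> x \<in> W \<longrightarrow>
      (\<exists>U. closedin X U \<and> openin X U \<and> x \<in> U \<and> U \<subseteq> W))"
  unfolding dimension_le_0_neighbourhood_base_of_clopen
  by (subst open_neighbourhood_base_of) auto

lemma compact_dim_le_0_chained_dist_less:
  fixes X :: "'a::metric_space set"
  assumes X: "compact X" and dim: "top_of_set X dim_le 0" and "\<epsilon> > 0"
  obtains \<eta> where "\<eta> > 0" "\<And>a b. a \<in> X \<Longrightarrow> chained X \<eta> a b \<Longrightarrow> dist a b < \<epsilon>"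
proof -
  have "\<exists>U. closedin (top_of_set X) U \<and> openin (top_of_set X) U \<and> x \<in> U \<and> U \<subseteq> X \<inter> ball x (\<epsilon> / 2)"
    if "x \<in> X" for x
  proof -
    have "openin (top_of_set X) (X \<inter> ball x (\<epsilon> / 2))"
      by (simp add: openin_open_Int)
    then show ?thesis
      using dim \<open>\<epsilon> > 0\<close> that unfolding dim_le_0_iff_clopen_neighbourhoods
      by (metis IntI centre_in_ball half_gt_zero)
  qed
  then obtain U where U: "\<And>x. x \<in> X \<Longrightarrow> closedin (top_of_set X) (U x) \<and> openin (top_of_set X) (U x)
      \<and> x \<in> U x \<and> U x \<subseteq> X \<inter> ball x (\<epsilon> / 2)"
    by metis
  have "\<exists>e>0. \<forall>a b. a \<in> U x \<longrightarrow> chained X e a b \<longrightarrow> b \<in> U x" if "x \<in> X" for x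
    using chained_stays_in_clopen[OF X, of "U x"] U[OF that] by metis
  then obtain e where e: "\<And>x. x \<in> X \<Longrightarrow> e x > 0"
    "\<And>x a b. x \<in> X \<Longrightarrow> a \<in> U x \<Longrightarrow> chained X (e x) a b \<Longrightarrow> b \<in> U x"
    by metis
  obtain T where T: "\<And>x. x \<in> X \<Longrightarrow> open (T x) \<and> U x = X \<inter> T x"
    using U unfolding openin_open by metis
  have "X \<subseteq> (\<Union>x\<in>X. T x)"
    using T U by blast
  then obtain D where D: "D \<subseteq> X" "finite D" "X \<subseteq> (\<Union>x\<in>D. T x)"
    using compactE_image[OF X, of X T] T by metis
  define \<eta> where "\<eta> = Min (insert 1 (e ` D))"
  show thesis
  proof (rule that)
    show "\<eta> > 0"
      unfolding \<eta>_def using D(1,2) e(1) by (subst Min_gr_iff) auto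
    fix a b assume a: "a \<in> X" and ab: "chained X \<eta> a b"
    then obtain x where x: "x \<in> D" "a \<in> T x"
      using D(3) by blast
    then have "a \<in> U x"
      using T[of x] D(1) a by blast
    have "\<eta> \<le> e x"
      unfolding \<eta>_def using D(2) x(1) by (intro Min_le) auto
    then have "b \<in> U x"
      using e(2)[OF _ \<open>a \<in> U x\<close> chained_mono[OF ab]] D(1) x(1) by blast
    moreover have "U x \<subseteq> ball x (\<epsilon> / 2)"
      using U[of x] x(1) D(1) by blast
    ultimately show "dist a b < \<epsilon>"
      using \<open>a \<in> U x\<close> dist_triangle_half_l[of a x \<epsilon> b] by (auto simp: dist_commute subset_iff)
  qed
qed

lemma totally_disconnectedI:
  assumes "\<And>S x y. S \<subseteq> X \<Longrightarrow> connected S \<Longrightarrow> x \<in> S \<Longrightarrow> y \<in> S \<Longrightarrow> x = y"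
  shows "totally_disconnected X"
  unfolding totally_disconnected_def using assms by blast

lemma totally_disconnectedD:
  "totally_disconnected X \<Longrightarrow> S \<subseteq> X \<Longrightarrow> connected S \<Longrightarrow> x \<in> S \<Longrightarrow> y \<in> S \<Longrightarrow> x = y"
  unfolding totally_disconnected_def by blast

lemma dim_le_0_imp_totally_disconnected:
  fixes X :: "'a::metric_space set"
  assumes dim: "top_of_set X dim_le 0"
  shows "totally_disconnected X"
proof (rule totally_disconnectedI, rule ccontr)
  fix S x y assume S: "S \<subseteq> X" "connected S" "x \<in> S" "y \<in> S" "x \<noteq> y"
  have "openin (top_of_set X) (X - {y})"
    by (metis Diff_eq open_Compl closed_singleton openin_open_Int)
  then obtain U where U: "closedin (top_of_set X) U" "openin (top_of_set X) U" "x \<in> U" "U \<subseteq> X - {y}"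
    using dim S unfolding dim_le_0_iff_clopen_neighbourhoods by blast
  have "connectedin (top_of_set X) S"
    using S by (simp add: connectedin_subtopology)
  then have "S \<subseteq> U \<or> disjnt S U"
    using U(1,2) by (rule connectedin_clopen_cases)
  then show False
    using U(3,4) S(3,4) by (auto simp: disjnt_iff)
qed

lemma compact_totally_disconnected_imp_dim_le_0:
  fixes X :: "'a::metric_space set"
  assumes "compact X" and TD: "totally_disconnected X"
  shows "top_of_set X dim_le 0"
  unfolding dim_le_0_iff_clopen_neighbourhoods
proof (intro allI impI)
  fix W x assume W: "openin (top_of_set X) W \<and> x \<in> W"
  then have x: "x \<in> X"
    using openin_imp_subset by blast
  have "connected_component_of_set (top_of_set X) x = {x}"
  proof (intro set_eqI iffI)
    fix y assume "y \<in> connected_component_of_set (top_of_set X) x"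
    then obtain T where "connectedin (top_of_set X) T" "x \<in> T" "y \<in> T"
      unfolding connected_component_of_def by auto
    then show "y \<in> {x}"
      using totally_disconnectedD[OF TD, of T y x] by (simp add: connectedin_subtopology)
  qed (simp add: connected_component_of_refl x)
  then have "{x} \<in> connected_components_of (top_of_set X)"
    using connected_component_in_connected_components_of[of "top_of_set X" x] x by simp
  moreover have "locally_compact_space (top_of_set X)"
    using assms by (simp add: compact_imp_locally_compact_space compact_space_subtopology)
  moreover have "Hausdorff_space (top_of_set X)"
    by (simp add: Hausdorff_space_subtopology Hausdorff_space_euclidean)
  moreover have "compactin (top_of_set X) {x}"
    using x by simp
  ultimately obtain U V where UV: "openin (top_of_set X) U" "openin (top_of_set X) V"
    "disjnt U V" "U \<union> V = X" "x \<in> U" "U \<subseteq> W"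
    using W by (elim wilder_locally_compact_component_thm) auto
  then have "X - U = V"
    by (auto simp: disjnt_def)
  then have "closedin (top_of_set X) U"
    using UV by (auto simp: closedin_def)
  then show "\<exists>U. closedin (top_of_set X) U \<and> openin (top_of_set X) U \<and> x \<in> U \<and> U \<subseteq> W"
    using UV by blast
qed

section \<open>Oscillating sequences in connected sets\<close>

text \<open>The pair (block, offset) reached at time t when consecutive blocks of lengths
  N 0, N 1, ... are traversed one step per time unit.\<close>

primrec block_pos :: "(nat \<Rightarrow> nat) \<Rightarrow> nat \<Rightarrow> nat \<times> nat" where
  "block_pos N 0 = (0, 0)"
| "block_pos N (Suc t) = (case block_pos N t of (k, i) \<Rightarrow>
     if Suc i < N k then (k, Suc i) else (Suc k, 0))"

lemma block_pos_offset_less: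
  "(\<And>k. N k > 0) \<Longrightarrow> snd (block_pos N t) < N (fst (block_pos N t))"
  by (induction t) (auto split: prod.split)

lemma block_pos_block_mono: "mono (\<lambda>t. fst (block_pos N t))"
  by (rule incseq_SucI) (auto split: prod.split)

lemma block_pos_block_le: "fst (block_pos N t) \<le> t"
  by (induction t) (auto split: prod.split)

lemma block_pos_within_block:
  "block_pos N t = (k, 0) \<Longrightarrow> i < N k \<Longrightarrow> block_pos N (t + i) = (k, i)"
  by (induction i) auto

lemma block_pos_block_start:
  assumes "\<And>k. N k > 0"
  shows "\<exists>t. block_pos N t = (k, 0)"
proof (induction k)
  case 0
  show ?case
    using block_pos.simps(1) by blast
next
  case (Suc k)
  then obtain t where t: "block_pos N t = (k, 0)" ..
  obtain j where j: "N k = Suc j"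
    using assms gr0_implies_Suc by blast
  then have "block_pos N (Suc (t + j)) = (Suc k, 0)"
    using block_pos_within_block[OF t, of j] by simp
  then show ?case ..
qed

lemma block_pos_block_tendsto:
  assumes "\<And>k. N k > 0"
  shows "filterlim (\<lambda>t. fst (block_pos N t)) at_top sequentially"
  unfolding filterlim_at_top eventually_sequentially
proof
  fix k
  obtain T where "block_pos N T = (k, 0)"
    using block_pos_block_start[of N, OF assms] by blast
  then have "k \<le> fst (block_pos N t)" if "T \<le> t" for t
    using block_pos_block_mono[of N] that by (metis fst_conv monoD)
  then show "\<exists>T. \<forall>t\<ge>T. k \<le> fst (block_pos N t)"
    by blast
qed

definition concat_blocks :: "(nat \<Rightarrow> nat) \<Rightarrow> (nat \<Rightarrow> nat \<Rightarrow> 'a) \<Rightarrow> nat \<Rightarrow> 'a" where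
  "concat_blocks N L t = (case block_pos N t of (k, i) \<Rightarrow> L k i)"

lemma concat_blocks_step:
  assumes "\<And>k. N k > 0" and glue: "\<And>k. L k (N k) = L (Suc k) 0" and t: "block_pos N t = (k, i)"
  shows "i < N k" "concat_blocks N L t = L k i" "concat_blocks N L (Suc t) = L k (Suc i)"
proof -
  show "i < N k"
    using block_pos_offset_less[of N t] assms(1) t by simp
  show "concat_blocks N L (Suc t) = L k (Suc i)"
  proof (cases "Suc i < N k")
    case False
    then have "N k = Suc i"
      using \<open>i < N k\<close> by simp
    then show ?thesis
      using glue[of k] t by (simp add: concat_blocks_def)
  qed (simp add: concat_blocks_def t)
qed (simp add: concat_blocks_def t)

lemma concat_blocks_steps_tendsto_0:
  assumes N_pos: "\<And>k. N k > 0" and glue: "\<And>k. L k (N k) = L (Suc k) 0"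
    and steps: "\<And>k i. i < N k \<Longrightarrow> dist (L k i) (L k (Suc i)) \<le> r k" and r: "r \<longlonglongrightarrow> 0"
  shows "(\<lambda>t. dist (concat_blocks N L t) (concat_blocks N L (Suc t))) \<longlonglongrightarrow> 0"
proof -
  have step_bound: "dist (concat_blocks N L t) (concat_blocks N L (Suc t)) \<le> r (fst (block_pos N t))" for t
  proof (cases "block_pos N t")
    case (Pair k i)
    note step = concat_blocks_step[of N L, OF N_pos glue Pair]
    have "fst (block_pos N t) = k"
      using Pair by simp
    then show ?thesis
      unfolding step(2,3) using steps[OF step(1)] by simp
  qed
  have "(\<lambda>t. r (fst (block_pos N t))) \<longlonglongrightarrow> 0"
    using r block_pos_block_tendsto[of N, OF N_pos] by (rule filterlim_compose)
  then show ?thesis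
    by (rule Lim_null_comparison[rotated]) (use step_bound in \<open>simp add: always_eventually\<close>)
qed

lemma concat_blocks_block_start:
  assumes "\<And>k. N k > 0"
  shows "\<exists>t\<ge>k. concat_blocks N L t = L k 0"
proof -
  obtain t where t: "block_pos N t = (k, 0)"
    using block_pos_block_start[of N, OF assms] by blast
  then have "k \<le> t"
    using block_pos_block_le[of N t] by simp
  moreover have "concat_blocks N L t = L k 0"
    using t by (simp add: concat_blocks_def)
  ultimately show ?thesis
    by blast
qed

lemma connected_oscillating_sequence:
  assumes "connected S" "x \<in> S" "y \<in> S"
  obtains c where "\<And>t. c t \<in> S" "(\<lambda>t. dist (c t) (c (Suc t))) \<longlonglongrightarrow> 0"
    "\<And>T. \<exists>t\<ge>T. c t = x" "\<And>T. \<exists>t\<ge>T. c t = y"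
proof -
  define p where "p k = (if even k then x else y)" for k :: nat
  have pS: "p k \<in> S" for k
    using assms unfolding p_def by simp
  have "\<exists>C K. C 0 = p k \<and> C K = p (Suc k) \<and>
      (\<forall>i<K. C i \<in> S \<and> C (Suc i) \<in> S \<and> dist (C i) (C (Suc i)) < inverse (real (Suc k)))" for k
  proof -
    have "chained S (inverse (real (Suc k))) (p k) (p (Suc k))"
      using connected_imp_chained[OF assms(1) pS pS] by simp
    then show ?thesis
      by (elim chainedE) blast
  qed
  then obtain C K where "\<forall>k. C k 0 = p k \<and> C k (K k) = p (Suc k) \<and>
      (\<forall>i<K k. C k i \<in> S \<and> C k (Suc i) \<in> S \<and> dist (C k i) (C k (Suc i)) < inverse (real (Suc k)))"
    by metis
  then have C0: "\<And>k. C k 0 = p k" and CK: "\<And>k. C k (K k) = p (Suc k)"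
    and Cstep: "\<And>k i. i < K k \<Longrightarrow> C k i \<in> S \<and> C k (Suc i) \<in> S \<and>
      dist (C k i) (C k (Suc i)) < inverse (real (Suc k))"
    by blast+
  text \<open>Block k is the chain C k followed by one repetition of its endpoint, so no block is empty.\<close>
  define L where "L k i = C k (min i (K k))" for k i
  define N where "N k = Suc (K k)" for k
  have N_pos: "N k > 0" for k
    unfolding N_def by simp
  have glue: "L k (N k) = L (Suc k) 0" for k
    unfolding L_def N_def using CK C0 by simp
  have LS: "L k i \<in> S" for k i
  proof (cases "i < K k")
    case False
    then show ?thesis
      using CK[of k] pS by (simp add: L_def)
  qed (use Cstep in \<open>auto simp: L_def\<close>)
  have L_step: "dist (L k i) (L k (Suc i)) \<le> inverse (real (Suc k))" for k i
  proof (cases "i < K k")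
    case True
    then show ?thesis
      using Cstep[OF True] by (simp add: L_def less_imp_le)
  qed (simp add: L_def)
  have visit: "\<exists>t\<ge>T. concat_blocks N L t = p k" if "T \<le> k" for T k
    using concat_blocks_block_start[of N k L, OF N_pos] C0[of k] that
    unfolding L_def by (metis min_0L order_trans)
  show thesis
  proof
    show "concat_blocks N L t \<in> S" for t
      using LS by (simp add: concat_blocks_def split: prod.split)
    show "(\<lambda>t. dist (concat_blocks N L t) (concat_blocks N L (Suc t))) \<longlonglongrightarrow> 0"
      using N_pos glue L_step LIMSEQ_inverse_real_of_nat by (rule concat_blocks_steps_tendsto_0)
    show "\<exists>t\<ge>T. concat_blocks N L t = x" for T
      using visit[of T "2 * T"] by (simp add: p_def)
    show "\<exists>t\<ge>T. concat_blocks N L t = y" for T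
      using visit[of T "Suc (2 * T)"] by (simp add: p_def)
  qed
qed

section \<open>Equicontinuous homeomorphisms\<close>

locale equicontinuous_homeomorphism =
  fixes X :: "'a::metric_space set" and f g :: "'a \<Rightarrow> 'a"
  assumes compact: "compact X"
    and homeomorphism: "homeomorphism X X f g"
    and equicontinuous: "equicontinuous_on X f"
begin

lemma maps_to: "x \<in> X \<Longrightarrow> f x \<in> X"
  using homeomorphism by (auto simp: homeomorphism_def)

lemma funpow_in: "x \<in> X \<Longrightarrow> (f ^^ n) x \<in> X"
  by (induction n) (auto simp: maps_to)

lemma inv_funpow_in: "x \<in> X \<Longrightarrow> (g ^^ n) x \<in> X"
  using homeomorphism by (induction n) (auto simp: homeomorphism_def)

lemma funpow_inv_funpow: "y \<in> X \<Longrightarrow> (f ^^ n) ((g ^^ n) y) = y"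
proof (induction n)
  case (Suc n)
  have "f (g ((g ^^ n) y)) = (g ^^ n) y"
    using homeomorphism inv_funpow_in[OF Suc.prems] by (simp add: homeomorphism_def)
  have "(f ^^ Suc n) ((g ^^ Suc n) y) = (f ^^ n) (f (g ((g ^^ n) y)))"
    by (simp add: funpow_swap1)
  also have "\<dots> = y"
    using Suc \<open>f (g ((g ^^ n) y)) = (g ^^ n) y\<close> by simp
  finally show ?case .
qed simp

lemma funpow_shift: "t \<le> s \<Longrightarrow> (f ^^ s) x = (f ^^ (s - t)) ((f ^^ t) x)"
  by (metis funpow_add le_add_diff_inverse2 o_apply)

lemma equicontinuousE:
  assumes "e > 0"
  obtains \<delta> where "\<delta> > 0"
    "\<And>x y n. x \<in> X \<Longrightarrow> y \<in> X \<Longrightarrow> dist x y \<le> \<delta> \<Longrightarrow> dist ((f ^^ n) x) ((f ^^ n) y) \<le> e"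
  using equicontinuous assms unfolding equicontinuous_on_def by blast

text \<open>Backward orbits under g accumulate in the compact square X \<times> X; two of their
  points at times i < j that are \<delta>-close are carried by f^j to a simultaneous
  \<epsilon>-return of x and y at time j - i.\<close>

lemma simultaneous_recurrence:
  assumes x: "x \<in> X" and y: "y \<in> X" and "\<epsilon> > 0"
  shows "\<exists>m\<ge>K. dist ((f ^^ m) x) x \<le> \<epsilon> \<and> dist ((f ^^ m) y) y \<le> \<epsilon>"
proof -
  obtain \<delta> where "\<delta> > 0" and \<delta>: "\<And>x y n. x \<in> X \<Longrightarrow> y \<in> X \<Longrightarrow> dist x y \<le> \<delta> \<Longrightarrow>
      dist ((f ^^ n) x) ((f ^^ n) y) \<le> \<epsilon>"
    using equicontinuousE[OF \<open>\<epsilon> > 0\<close>] by blast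
  define p where "p n = ((g ^^ n) x, (g ^^ n) y)" for n
  have "p n \<in> X \<times> X" for n
    unfolding p_def using inv_funpow_in x y by simp
  then obtain l s where s: "strict_mono s" and lim: "(p \<circ> s) \<longlonglongrightarrow> l"
    using seq_compactE[OF compact_imp_seq_compact[OF compact_Times[OF compact compact]]] by blast
  from lim have "Cauchy (p \<circ> s)"
    by (rule LIMSEQ_imp_Cauchy)
  then obtain M where M: "\<And>m n. m \<ge> M \<Longrightarrow> n \<ge> M \<Longrightarrow> dist (p (s m)) (p (s n)) < \<delta>"
    using metric_CauchyD[OF _ \<open>\<delta> > 0\<close>] by fastforce
  define i j where "i = s M" and "j = s (M + K)"
  have "i + K \<le> j"
    unfolding i_def j_def using s by (simp add: mono_nat_linear_lb strict_mono_def)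
  have "dist (p i) (p j) < \<delta>"
    using M[of M "M + K"] unfolding i_def j_def by simp
  then have "dist ((g ^^ i) x) ((g ^^ j) x) \<le> \<delta>" "dist ((g ^^ i) y) ((g ^^ j) y) \<le> \<delta>"
    using dist_fst_le[of "p i" "p j"] dist_snd_le[of "p i" "p j"] unfolding p_def by auto
  then have "dist ((f ^^ j) ((g ^^ i) x)) ((f ^^ j) ((g ^^ j) x)) \<le> \<epsilon>"
    "dist ((f ^^ j) ((g ^^ i) y)) ((f ^^ j) ((g ^^ j) y)) \<le> \<epsilon>"
    using \<delta> inv_funpow_in x y by blast+
  moreover have "(f ^^ j) ((g ^^ i) z) = (f ^^ (j - i)) z" if "z \<in> X" for z
    using funpow_shift[of i j] funpow_inv_funpow[OF that] \<open>i + K \<le> j\<close> by simp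
  ultimately have "dist ((f ^^ (j - i)) x) x \<le> \<epsilon>" "dist ((f ^^ (j - i)) y) y \<le> \<epsilon>"
    using x y funpow_inv_funpow by simp_all
  moreover have "j - i \<ge> K"
    using \<open>i + K \<le> j\<close> by simp
  ultimately show ?thesis
    by blast
qed

lemma dist_le_if_eventually_le:
  assumes "x \<in> X" "y \<in> X" and le: "\<And>s. s \<ge> K \<Longrightarrow> dist ((f ^^ s) x) ((f ^^ s) y) \<le> r"
  shows "dist x y \<le> r"
proof (rule field_le_epsilon)
  fix \<epsilon> :: real assume "\<epsilon> > 0"
  then obtain m where "m \<ge> K" "dist ((f ^^ m) x) x \<le> \<epsilon> / 2" "dist ((f ^^ m) y) y \<le> \<epsilon> / 2"
    using simultaneous_recurrence[OF assms(1,2), of "\<epsilon> / 2"] by auto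
  moreover have "dist x y \<le> dist x ((f ^^ m) x) + dist ((f ^^ m) x) y"
    by (rule dist_triangle)
  moreover have "dist ((f ^^ m) x) y \<le> dist ((f ^^ m) x) ((f ^^ m) y) + dist ((f ^^ m) y) y"
    by (rule dist_triangle)
  moreover have "dist x ((f ^^ m) x) = dist ((f ^^ m) x) x"
    by (rule dist_commute)
  ultimately show "dist x y \<le> r + \<epsilon>"
    using le[of m] by linarith
qed

lemma eq_if_close_to_common_orbit:
  assumes x: "x \<in> X" and y: "y \<in> X"
    and close: "\<And>e. e > 0 \<Longrightarrow>
      \<exists>z\<in>X. \<exists>t1 t2. dist ((f ^^ t1) x) ((f ^^ t1) z) \<le> e \<and> dist ((f ^^ t2) y) ((f ^^ t2) z) \<le> e"
  shows "x = y"
proof -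
  have "dist x y \<le> 0 + \<epsilon>" if "\<epsilon> > 0" for \<epsilon>
  proof -
    have "\<epsilon> / 2 > 0"
      using that by simp
    then obtain \<delta> where "\<delta> > 0" and \<delta>: "\<And>x y n. x \<in> X \<Longrightarrow> y \<in> X \<Longrightarrow> dist x y \<le> \<delta> \<Longrightarrow>
        dist ((f ^^ n) x) ((f ^^ n) y) \<le> \<epsilon> / 2"
      using equicontinuousE by blast
    obtain z t1 t2 where z: "z \<in> X"
      and t1: "dist ((f ^^ t1) x) ((f ^^ t1) z) \<le> \<delta>" and t2: "dist ((f ^^ t2) y) ((f ^^ t2) z) \<le> \<delta>"
      using close[OF \<open>\<delta> > 0\<close>] by blast
    have stay: "dist ((f ^^ s) w) ((f ^^ s) z) \<le> \<epsilon> / 2"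
      if "w \<in> X" "dist ((f ^^ t) w) ((f ^^ t) z) \<le> \<delta>" "t \<le> s" for w t s
      unfolding funpow_shift[OF that(3)] using \<delta> funpow_in z that(1,2) by blast
    have "dist ((f ^^ s) x) ((f ^^ s) y) \<le> \<epsilon>" if "s \<ge> max t1 t2" for s
    proof -
      have "dist ((f ^^ s) x) ((f ^^ s) z) \<le> \<epsilon> / 2" "dist ((f ^^ s) y) ((f ^^ s) z) \<le> \<epsilon> / 2"
        using stay[OF x t1] stay[OF y t2] that by simp_all
      then show ?thesis
        using dist_triangle2[of "(f ^^ s) x" "(f ^^ s) y" "(f ^^ s) z"] by linarith
    qed
    then show ?thesis
      using dist_le_if_eventually_le[OF x y, of "max t1 t2" \<epsilon>] by simp
  qed
  then show ?thesis
    using field_le_epsilon[of "dist x y" 0] by simp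
qed

lemma shadowing_imp_totally_disconnected:
  assumes shadowing: "shadowing_on X f"
  shows "totally_disconnected X"
proof (rule totally_disconnectedI)
  fix S x y assume S: "S \<subseteq> X" "connected S" "x \<in> S" "y \<in> S"
  show "x = y"
  proof (rule eq_if_close_to_common_orbit)
    show "x \<in> X" "y \<in> X"
      using S by auto
    fix e :: real assume "e > 0"
    then obtain \<delta> where "\<delta> > 0" and shadow: "\<forall>xs. (\<forall>i. xs i \<in> X) \<and>
        (\<forall>i. dist (f (xs i)) (xs (Suc i)) \<le> \<delta>) \<longrightarrow> (\<exists>z\<in>X. \<forall>i. dist (xs i) ((f ^^ i) z) \<le> e)"
      using shadowing unfolding shadowing_on_def by blast
    obtain \<eta> where "\<eta> > 0" and \<eta>: "\<And>a b n. a \<in> X \<Longrightarrow> b \<in> X \<Longrightarrow> dist a b \<le> \<eta> \<Longrightarrow>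
        dist ((f ^^ n) a) ((f ^^ n) b) \<le> \<delta>"
      using equicontinuousE[OF \<open>\<delta> > 0\<close>] by blast
    obtain c K where c: "c 0 = x" "c K = y"
      "\<And>i. i < K \<Longrightarrow> c i \<in> S \<and> c (Suc i) \<in> S \<and> dist (c i) (c (Suc i)) < \<eta>"
      using chainedE[OF connected_imp_chained[OF S(2-4) \<open>\<eta> > 0\<close>]] by blast
    text \<open>Follow the orbit of c i for one step, then jump to the orbit of c (i + 1).\<close>
    define xs where "xs i = (f ^^ i) (c (min i K))" for i
    have "c (min i K) \<in> X" for i
      using c S by (cases "i < K") (auto simp: min_def)
    then have xs_in: "\<forall>i. xs i \<in> X"
      unfolding xs_def using funpow_in by blast
    have "dist (f (xs i)) (xs (Suc i)) \<le> \<delta>" for i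
    proof (cases "i < K")
      case True
      then have "dist ((f ^^ Suc i) (c i)) ((f ^^ Suc i) (c (Suc i))) \<le> \<delta>"
        using \<eta> c(3)[OF True] S(1) by (meson less_imp_le subsetD)
      then show ?thesis
        using True by (simp add: xs_def)
    qed (use \<open>\<delta> > 0\<close> in \<open>simp add: xs_def min_def\<close>)
    then obtain z where "z \<in> X" and z: "\<And>i. dist (xs i) ((f ^^ i) z) \<le> e"
      using shadow xs_in by blast
    have "dist ((f ^^ 0) x) ((f ^^ 0) z) \<le> e" "dist ((f ^^ K) y) ((f ^^ K) z) \<le> e"
      using z[of 0] z[of K] c(1,2) by (simp_all add: xs_def)
    then show "\<exists>z\<in>X. \<exists>t1 t2. dist ((f ^^ t1) x) ((f ^^ t1) z) \<le> e \<and> dist ((f ^^ t2) y) ((f ^^ t2) z) \<le> e"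
      using \<open>z \<in> X\<close> by blast
  qed
qed

lemma limit_shadowing_imp_totally_disconnected:
  assumes limit_shadowing: "limit_shadowing_on X f"
  shows "totally_disconnected X"
proof (rule totally_disconnectedI)
  fix S x y assume S: "S \<subseteq> X" "connected S" "x \<in> S" "y \<in> S"
  obtain c where cS: "\<And>t. c t \<in> S" and c_steps: "(\<lambda>t. dist (c t) (c (Suc t))) \<longlonglongrightarrow> 0"
    and c_x: "\<And>T. \<exists>t\<ge>T. c t = x" and c_y: "\<And>T. \<exists>t\<ge>T. c t = y"
    using connected_oscillating_sequence[OF S(2-4)] by blast
  define xs where "xs t = (f ^^ t) (c t)" for t
  have xs_in: "\<forall>t. xs t \<in> X"
    unfolding xs_def using cS S(1) funpow_in by blast
  have "(\<lambda>t. dist (f (xs t)) (xs (Suc t))) \<longlonglongrightarrow> 0"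
  proof (rule tendstoI)
    fix r :: real assume "r > 0"
    then have "r / 2 > 0"
      by simp
    then obtain \<eta> where "\<eta> > 0" and \<eta>: "\<And>a b n. a \<in> X \<Longrightarrow> b \<in> X \<Longrightarrow> dist a b \<le> \<eta> \<Longrightarrow>
        dist ((f ^^ n) a) ((f ^^ n) b) \<le> r / 2"
      using equicontinuousE by blast
    show "\<forall>\<^sub>F t in sequentially. dist (dist (f (xs t)) (xs (Suc t))) 0 < r"
      using tendstoD[OF c_steps \<open>\<eta> > 0\<close>]
    proof (rule eventually_mono)
      fix t assume "dist (dist (c t) (c (Suc t))) 0 < \<eta>"
      then have close: "dist (c t) (c (Suc t)) \<le> \<eta>"
        by simp
      have "dist ((f ^^ Suc t) (c t)) ((f ^^ Suc t) (c (Suc t))) \<le> r / 2"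
        using \<eta>[OF _ _ close] cS S(1) by blast
      then show "dist (dist (f (xs t)) (xs (Suc t))) 0 < r"
        using \<open>r > 0\<close> by (simp add: xs_def)
    qed
  qed
  then obtain z where "z \<in> X" and z: "(\<lambda>t. dist (xs t) ((f ^^ t) z)) \<longlonglongrightarrow> 0"
    using limit_shadowing xs_in unfolding limit_shadowing_on_def by blast
  show "x = y"
  proof (rule eq_if_close_to_common_orbit)
    show "x \<in> X" "y \<in> X"
      using S by auto
    fix e :: real assume "e > 0"
    then obtain T where T: "\<And>t. t \<ge> T \<Longrightarrow> dist (xs t) ((f ^^ t) z) < e"
      using tendstoD[OF z] by (auto simp: eventually_sequentially)
    obtain t1 where "t1 \<ge> T" "c t1 = x"
      using c_x by blast
    obtain t2 where "t2 \<ge> T" "c t2 = y"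
      using c_y by blast
    have "dist ((f ^^ t1) x) ((f ^^ t1) z) \<le> e" "dist ((f ^^ t2) y) ((f ^^ t2) z) \<le> e"
      using T[OF \<open>t1 \<ge> T\<close>] T[OF \<open>t2 \<ge> T\<close>] \<open>c t1 = x\<close> \<open>c t2 = y\<close> by (simp_all add: xs_def)
    then show "\<exists>z\<in>X. \<exists>t1 t2. dist ((f ^^ t1) x) ((f ^^ t1) z) \<le> e \<and> dist ((f ^^ t2) y) ((f ^^ t2) z) \<le> e"
      using \<open>z \<in> X\<close> by blast
  qed
qed

text \<open>In a zero-dimensional X the e-chain classes are small clopen sets; orbit_chained is the
  f-invariant refinement of this partition along which pseudo-orbits are traced.\<close>

definition orbit_chained :: "real \<Rightarrow> 'a \<Rightarrow> 'a \<Rightarrow> bool" where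
  "orbit_chained e a b \<longleftrightarrow> (\<forall>n. chained X e ((f ^^ n) a) ((f ^^ n) b))"

lemma orbit_chained_refl [simp]: "orbit_chained e a a"
  unfolding orbit_chained_def by simp

lemma orbit_chained_sym: "orbit_chained e a b \<Longrightarrow> orbit_chained e b a"
  unfolding orbit_chained_def using chained_sym by blast

lemma orbit_chained_trans: "orbit_chained e a b \<Longrightarrow> orbit_chained e b c \<Longrightarrow> orbit_chained e a c"
  unfolding orbit_chained_def using chained_trans by blast

lemma orbit_chained_funpow:
  assumes "orbit_chained e a b"
  shows "orbit_chained e ((f ^^ m) a) ((f ^^ m) b)"
  unfolding orbit_chained_def
proof
  fix n
  have "chained X e ((f ^^ (n + m)) a) ((f ^^ (n + m)) b)"
    using assms unfolding orbit_chained_def by blast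
  then show "chained X e ((f ^^ n) ((f ^^ m) a)) ((f ^^ n) ((f ^^ m) b))"
    by (simp add: funpow_add)
qed

lemma orbit_chained_imp_chained: "orbit_chained e a b \<Longrightarrow> chained X e a b"
  unfolding orbit_chained_def by (drule spec[of _ 0]) simp

lemma orbit_chained_if_close:
  assumes "e > 0"
  obtains \<gamma> where "\<gamma> > 0" "\<And>a b. a \<in> X \<Longrightarrow> b \<in> X \<Longrightarrow> dist a b \<le> \<gamma> \<Longrightarrow> orbit_chained e a b"
proof -
  have "e / 2 > 0"
    using assms by simp
  then obtain \<gamma> where "\<gamma> > 0" and \<gamma>: "\<And>a b n. a \<in> X \<Longrightarrow> b \<in> X \<Longrightarrow> dist a b \<le> \<gamma> \<Longrightarrow>
      dist ((f ^^ n) a) ((f ^^ n) b) \<le> e / 2"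
    using equicontinuousE by blast
  show thesis
  proof (rule that[OF \<open>\<gamma> > 0\<close>])
    fix a b assume ab: "a \<in> X" "b \<in> X" "dist a b \<le> \<gamma>"
    have "chained X e ((f ^^ n) a) ((f ^^ n) b)" for n
    proof (rule chained_step)
      show "dist ((f ^^ n) a) ((f ^^ n) b) < e"
        using \<gamma>[OF ab, of n] assms by linarith
    qed (use funpow_in ab in blast)+
    then show "orbit_chained e a b"
      unfolding orbit_chained_def by blast
  qed
qed

text \<open>Invariance in backward time comes from recurrence: a and b return simultaneously
  near themselves at some time after m.\<close>

lemma orbit_chained_funpow_cancel:
  assumes "e > 0" "a \<in> X" "b \<in> X" and ab: "orbit_chained e ((f ^^ m) a) ((f ^^ m) b)"
  shows "orbit_chained e a b"
proof -
  obtain \<gamma> where "\<gamma> > 0" and \<gamma>: "\<And>a b. a \<in> X \<Longrightarrow> b \<in> X \<Longrightarrow> dist a b \<le> \<gamma> \<Longrightarrow> orbit_chained e a b"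
    using orbit_chained_if_close[OF \<open>e > 0\<close>] by blast
  obtain k where "k \<ge> m" "dist ((f ^^ k) a) a \<le> \<gamma>" "dist ((f ^^ k) b) b \<le> \<gamma>"
    using simultaneous_recurrence[OF assms(2,3) \<open>\<gamma> > 0\<close>] by blast
  then have "orbit_chained e a ((f ^^ k) a)" "orbit_chained e ((f ^^ k) b) b"
    using \<gamma> funpow_in assms(2,3) by (simp_all add: dist_commute)
  moreover have "orbit_chained e ((f ^^ k) a) ((f ^^ k) b)"
    using orbit_chained_funpow[OF ab, of "k - m"] unfolding funpow_shift[OF \<open>k \<ge> m\<close>] .
  ultimately show ?thesis
    using orbit_chained_trans by blast
qed

lemma orbit_chained_along_pseudo_orbit:
  assumes "\<And>i. i \<ge> T \<Longrightarrow> orbit_chained e (f (xs i)) (xs (Suc i))" and "i \<ge> T"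
  shows "orbit_chained e ((f ^^ m) (xs i)) (xs (i + m))"
proof (induction m)
  case (Suc m)
  then have "orbit_chained e (f ((f ^^ m) (xs i))) (f (xs (i + m)))"
    using orbit_chained_funpow[of e _ _ 1] by simp
  moreover have "orbit_chained e (f (xs (i + m))) (xs (i + Suc m))"
    using assms by simp
  ultimately show ?case
    using orbit_chained_trans by simp
qed simp

text \<open>A point whose orbit meets the pseudo-orbit at some time n \<ge> T follows it from time T on:
  forward from n by invariance, and backward down to T by cancellation.\<close>

lemma orbit_chained_through_pseudo_orbit:
  assumes "e > 0" and step: "\<And>i. i \<ge> T \<Longrightarrow> orbit_chained e (f (xs i)) (xs (Suc i))"
    and xs: "\<And>i. xs i \<in> X" and "z \<in> X" and z: "(f ^^ n) z = xs n" and "n \<ge> T" "i \<ge> T"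
  shows "orbit_chained e ((f ^^ i) z) (xs i)"
proof -
  define N where "N = max i n"
  have "i \<le> N" "n \<le> N"
    unfolding N_def by simp_all
  have "(f ^^ (N - i)) ((f ^^ i) z) = (f ^^ N) z"
    using funpow_shift[OF \<open>i \<le> N\<close>] by simp
  also have "\<dots> = (f ^^ (N - n)) (xs n)"
    using funpow_shift[OF \<open>n \<le> N\<close>] z by simp
  finally have "orbit_chained e ((f ^^ (N - i)) ((f ^^ i) z)) (xs N)"
    using orbit_chained_along_pseudo_orbit[of T e xs, OF step \<open>n \<ge> T\<close>, of "N - n"] \<open>n \<le> N\<close> by simp
  moreover have "orbit_chained e (xs N) ((f ^^ (N - i)) (xs i))"
    using orbit_chained_sym[OF orbit_chained_along_pseudo_orbit[of T e xs, OF step \<open>i \<ge> T\<close>, of "N - i"]]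
      \<open>i \<le> N\<close> by simp
  ultimately have "orbit_chained e ((f ^^ (N - i)) ((f ^^ i) z)) ((f ^^ (N - i)) (xs i))"
    by (rule orbit_chained_trans)
  then show ?thesis
    by (rule orbit_chained_funpow_cancel[OF \<open>e > 0\<close> funpow_in[OF \<open>z \<in> X\<close>] xs])
qed

lemma dim_le_0_imp_shadowing:
  assumes dim: "top_of_set X dim_le 0"
  shows "shadowing_on X f"
  unfolding shadowing_on_def
proof (intro allI impI)
  fix e :: real assume "e > 0"
  obtain \<eta> where "\<eta> > 0" and \<eta>: "\<And>a b. a \<in> X \<Longrightarrow> chained X \<eta> a b \<Longrightarrow> dist a b < e"
    using compact_dim_le_0_chained_dist_less[OF compact dim \<open>e > 0\<close>] by blast
  obtain \<gamma> where "\<gamma> > 0" and \<gamma>: "\<And>a b. a \<in> X \<Longrightarrow> b \<in> X \<Longrightarrow> dist a b \<le> \<gamma> \<Longrightarrow> orbit_chained \<eta> a b"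
    using orbit_chained_if_close[OF \<open>\<eta> > 0\<close>] by blast
  have "\<exists>z\<in>X. \<forall>i. dist (xs i) ((f ^^ i) z) \<le> e"
    if "\<forall>i. xs i \<in> X" "\<forall>i. dist (f (xs i)) (xs (Suc i)) \<le> \<gamma>" for xs
  proof
    from that have xs: "\<And>i. xs i \<in> X" and step: "\<And>i. dist (f (xs i)) (xs (Suc i)) \<le> \<gamma>"
      by blast+
    show "xs 0 \<in> X"
      by (rule xs)
    have "orbit_chained \<eta> (f (xs i)) (xs (Suc i))" for i
      by (rule \<gamma>[OF maps_to[OF xs] xs step])
    then have "orbit_chained \<eta> ((f ^^ i) (xs 0)) (xs i)" for i
      using orbit_chained_along_pseudo_orbit[where T = 0 and i = 0] by simp
    then have "dist ((f ^^ i) (xs 0)) (xs i) < e" for i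
      by (rule \<eta>[OF funpow_in[OF xs] orbit_chained_imp_chained])
    then show "\<forall>i. dist (xs i) ((f ^^ i) (xs 0)) \<le> e"
      by (simp add: dist_commute less_imp_le)
  qed
  then show "\<exists>\<delta>>0. \<forall>xs. (\<forall>i. xs i \<in> X) \<and> (\<forall>i. dist (f (xs i)) (xs (Suc i)) \<le> \<delta>) \<longrightarrow>
      (\<exists>z\<in>X. \<forall>i. dist (xs i) ((f ^^ i) z) \<le> e)"
    using \<open>\<gamma> > 0\<close> by blast
qed

text \<open>The shadowing point is a limit of points z n whose orbits pass through xs n at time n.\<close>

lemma dim_le_0_imp_limit_shadowing:
  assumes dim: "top_of_set X dim_le 0"
  shows "limit_shadowing_on X f"
  unfolding limit_shadowing_on_def
proof (intro allI impI)
  fix xs assume "(\<forall>i. xs i \<in> X) \<and> (\<lambda>i. dist (f (xs i)) (xs (Suc i))) \<longlonglongrightarrow> 0"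
  then have xs: "\<And>i. xs i \<in> X" and steps: "(\<lambda>i. dist (f (xs i)) (xs (Suc i))) \<longlonglongrightarrow> 0"
    by auto
  define z where "z n = (g ^^ n) (xs n)" for n
  have z_in: "z n \<in> X" and fz: "(f ^^ n) (z n) = xs n" for n
    unfolding z_def using xs inv_funpow_in funpow_inv_funpow by auto
  obtain l s where "l \<in> X" "strict_mono s" and l: "(z \<circ> s) \<longlonglongrightarrow> l"
    using seq_compactE[OF compact_imp_seq_compact[OF compact]] z_in by blast
  have "(\<lambda>i. dist (xs i) ((f ^^ i) l)) \<longlonglongrightarrow> 0"
  proof (rule tendstoI)
    fix e :: real assume "e > 0"
    obtain \<eta> where "\<eta> > 0" and \<eta>: "\<And>a b. a \<in> X \<Longrightarrow> chained X \<eta> a b \<Longrightarrow> dist a b < e"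
      using compact_dim_le_0_chained_dist_less[OF compact dim \<open>e > 0\<close>] by blast
    obtain \<gamma> where "\<gamma> > 0" and \<gamma>: "\<And>a b. a \<in> X \<Longrightarrow> b \<in> X \<Longrightarrow> dist a b \<le> \<gamma> \<Longrightarrow> orbit_chained \<eta> a b"
      using orbit_chained_if_close[OF \<open>\<eta> > 0\<close>] by blast
    obtain T where T: "\<And>i. i \<ge> T \<Longrightarrow> dist (f (xs i)) (xs (Suc i)) < \<gamma>"
      using tendstoD[OF steps \<open>\<gamma> > 0\<close>] by (auto simp: eventually_sequentially)
    have step: "orbit_chained \<eta> (f (xs i)) (xs (Suc i))" if "i \<ge> T" for i
      using \<gamma>[OF maps_to[OF xs] xs less_imp_le[OF T[OF that]]] .
    have track: "orbit_chained \<eta> ((f ^^ i) (z n)) (xs i)" if "n \<ge> T" "i \<ge> T" for n i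
      using orbit_chained_through_pseudo_orbit[OF \<open>\<eta> > 0\<close> step xs z_in fz that] .
    have "\<forall>\<^sub>F m in sequentially. T \<le> s m \<and> dist (z (s m)) l < \<gamma>"
    proof (rule eventually_conj)
      show "\<forall>\<^sub>F m in sequentially. T \<le> s m"
        using filterlim_subseq[OF \<open>strict_mono s\<close>] unfolding filterlim_at_top by (rule spec)
      show "\<forall>\<^sub>F m in sequentially. dist (z (s m)) l < \<gamma>"
        using tendstoD[OF l \<open>\<gamma> > 0\<close>] by simp
    qed
    then obtain m where m: "T \<le> s m" "dist (z (s m)) l < \<gamma>"
      unfolding eventually_sequentially by blast
    have "dist (xs i) ((f ^^ i) l) < e" if "i \<ge> T" for i
    proof -
      have "dist l (z (s m)) \<le> \<gamma>"
        using m(2) by (simp add: dist_commute)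
      then have "orbit_chained \<eta> l (z (s m))"
        by (rule \<gamma>[OF \<open>l \<in> X\<close> z_in])
      then have "orbit_chained \<eta> ((f ^^ i) l) ((f ^^ i) (z (s m)))"
        by (rule orbit_chained_funpow)
      then have "orbit_chained \<eta> ((f ^^ i) l) (xs i)"
        using track[OF m(1) that] by (rule orbit_chained_trans)
      then have "dist ((f ^^ i) l) (xs i) < e"
        by (rule \<eta>[OF funpow_in[OF \<open>l \<in> X\<close>] orbit_chained_imp_chained])
      then show ?thesis
        by (simp add: dist_commute)
    qed
    then show "\<forall>\<^sub>F i in sequentially. dist (dist (xs i) ((f ^^ i) l)) 0 < e"
      by (auto simp: eventually_sequentially)
  qed
  then show "\<exists>y\<in>X. (\<lambda>i. dist (xs i) ((f ^^ i) y)) \<longlonglongrightarrow> 0"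
    using \<open>l \<in> X\<close> by blast
qed
end

theorem lemma3p1:
  fixes X :: "'a::metric_space set" and f :: "'a \<Rightarrow> 'a"
  assumes "compact X"
    and "\<exists>g. homeomorphism X X f g"
    and "equicontinuous_on X f"
  shows "(limit_shadowing_on X f \<longleftrightarrow> shadowing_on X f)
       \<and> (shadowing_on X f \<longleftrightarrow> (top_of_set X) dim_le 0)
       \<and> (shadowing_on X f \<longleftrightarrow> totally_disconnected X)"
proof -
  obtain g where "homeomorphism X X f g"
    using assms(2) by blast
  then interpret equicontinuous_homeomorphism X f g
    using assms(1,3) by unfold_locales
  have "top_of_set X dim_le 0 \<longleftrightarrow> totally_disconnected X"
    using dim_le_0_imp_totally_disconnected compact_totally_disconnected_imp_dim_le_0[OF assms(1)] by blast
  then show ?thesis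
    using shadowing_imp_totally_disconnected limit_shadowing_imp_totally_disconnected
      dim_le_0_imp_shadowing dim_le_0_imp_limit_shadowing by blast
qed

end
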